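(* Let $P_0,P_1,P_2\in\mathbb H$ be distinct, let $\alpha:=-1+\langle P_0,P_1\rangle+\langle P_1,P_2\rangle+\langle P_2,P_0\rangle$, $\chi:=\langle P_0\tilde\times P_1,P_2\rangle$, $d_0:=\sqrt{1-2\langle P_1,P_2\rangle}$, $d_1:=\sqrt{1-2\langle P_2,P_0\rangle}$, $d_2:=\sqrt{1-2\langle P_0,P_1\rangle}$ (indices in $\mathbb Z/3\mathbb Z$), and $\gamma:=3(d_0^2+1)(d_1^2+1)(d_2^2+1)$. Then $$(2\chi)^2\le\frac13\sum_{i=0}^2 d_i^2(d_{i+1}^2-3)(d_{i+2}^2-3)\qquad\text{and}\qquad -24\alpha\chi\le\gamma.$$
   Context: $\langle v,w\rangle=-v_1w_1+v_2w_2+v_3w_3$ on $\mathbb R^3$; $\mathbb H=\{P\in\mathbb R^3:\langle P,P\rangle=-1,\ P_1\ge1\}$; $v\tilde\times w:=J(v\times w)$ with $J=\mathrm{diag}(-1,1,1)$ and $\times$ the Euclidean cross product. *)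

theory Defs
  imports "HOL-Analysis.Analysis"
begin

definition mink :: "real^3 \<Rightarrow> real^3 \<Rightarrow> real" where
  "mink v w = - (v$1 * w$1) + v$2 * w$2 + v$3 * w$3"

definition hyp :: "(real^3) set" where
  "hyp = {P. mink P P = -1 \<and> P$1 \<ge> 1}"

definition Jmap :: "real^3 \<Rightarrow> real^3" where
  "Jmap v = (\<chi> i. if i = 1 then - (v$i) else v$i)"

definition lcross :: "real^3 \<Rightarrow> real^3 \<Rightarrow> real^3" where
  "lcross v w = Jmap (cross3 v w)"

end

theory Submission
  imports Defs
begin

text \<open>Put \<open>a = -\<langle>P\<^sub>1,P\<^sub>2\<rangle>\<close>, \<open>b = -\<langle>P\<^sub>2,P\<^sub>0\<rangle>\<close>, \<open>c = -\<langle>P\<^sub>0,P\<^sub>1\<rangle>\<close>.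
  Since \<open>\<chi>\<close> is the Euclidean determinant of \<open>P\<^sub>0,P\<^sub>1,P\<^sub>2\<close> and \<open>det J = -1\<close>, \<open>\<chi>\<^sup>2\<close> is minus the
  Lorentzian Gram determinant, \<open>\<chi>\<^sup>2 = 1 + 2abc - a\<^sup>2 - b\<^sup>2 - c\<^sup>2 = 2(1+a)(1+b)(1+c) - (1+a+b+c)\<^sup>2\<close>.
  From this both inequalities hold for arbitrary reals \<open>a, b, c\<close>: the first reduces to
  \<open>(a-b)\<^sup>2 + (b-c)\<^sup>2 + (c-a)\<^sup>2 \<ge> 0\<close>, the second to \<open>2(1+a+b+c)\<chi> \<le> (1+a+b+c)\<^sup>2 + \<chi>\<^sup>2\<close>.
  The hyperboloid is needed only through the reverse Cauchy-Schwarz inequality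
  \<open>\<langle>P,Q\<rangle> \<le> -1\<close>, which makes the radicands of the \<open>d\<^sub>i\<close> nonnegative.\<close>

lemma mink_lcross: "mink (lcross u v) w = cross3 u v \<bullet> w"
  unfolding mink_def lcross_def Jmap_def inner_vec_def by (simp add: sum_3)

lemma mink_lcross_squared:
  "(mink (lcross u v) w)\<^sup>2 =
     mink u u * (mink v w)\<^sup>2 + mink v v * (mink w u)\<^sup>2 + mink w w * (mink u v)\<^sup>2
     - mink u u * mink v v * mink w w - 2 * mink u v * mink v w * mink w u"
  unfolding mink_lcross unfolding mink_def inner_vec_def cross3_def by (simp add: sum_3) algebra

lemma hyp_mink_self: "P \<in> hyp \<Longrightarrow> mink P P = -1"
  unfolding hyp_def by simp

lemma mink_hyp_le_neg1:
  assumes P: "P \<in> hyp" and Q: "Q \<in> hyp"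
  shows "mink P Q \<le> -1"
proof -
  let ?s = "1 + P$2 * Q$2 + P$3 * Q$3"
  have P1: "P$1 \<ge> 1" and Q1: "Q$1 \<ge> 1" using P Q unfolding hyp_def by auto
  \<comment> \<open>Lagrange's identity for \<open>(1, P$2, P$3)\<close> and \<open>(1, Q$2, Q$3)\<close>\<close>
  have "(P$1 * Q$1)\<^sup>2 = ?s\<^sup>2 + (P$2 * Q$3 - P$3 * Q$2)\<^sup>2 + (P$2 - Q$2)\<^sup>2 + (P$3 - Q$3)\<^sup>2"
    using P Q unfolding hyp_def mink_def by simp algebra
  then have "?s\<^sup>2 \<le> (P$1 * Q$1)\<^sup>2" by simp
  moreover have "P$1 * Q$1 \<ge> 0" using P1 Q1 by simp
  ultimately have "?s \<le> P$1 * Q$1" by (rule power2_le_imp_le)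
  then show ?thesis unfolding mink_def by simp
qed

lemma gram_chi_sq_le:
  fixes a b c chi :: real
  assumes "chi\<^sup>2 = 1 + 2*a*b*c - a\<^sup>2 - b\<^sup>2 - c\<^sup>2"
  shows "(2*chi)\<^sup>2 \<le> (1/3) * ((1 + 2*a) * (2*b - 2) * (2*c - 2) + (1 + 2*b) * (2*c - 2) * (2*a - 2)
                           + (1 + 2*c) * (2*a - 2) * (2*b - 2))"
proof -
  have "0 \<le> (a - b)\<^sup>2 + (b - c)\<^sup>2 + (c - a)\<^sup>2" by simp
  then show ?thesis using assms by (simp add: power2_eq_square algebra_simps)
qed

lemma gram_chi_mult_le:
  fixes a b c chi :: real
  assumes "chi\<^sup>2 = 1 + 2*a*b*c - a\<^sup>2 - b\<^sup>2 - c\<^sup>2"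
  shows "(1 + a + b + c) * chi \<le> (1 + a) * (1 + b) * (1 + c)"
proof -
  have "2 * ((1 + a) * (1 + b) * (1 + c)) = (1 + a + b + c)\<^sup>2 + chi\<^sup>2"
    using assms by (simp add: power2_eq_square algebra_simps)
  moreover have "2 * ((1 + a + b + c) * chi) \<le> (1 + a + b + c)\<^sup>2 + chi\<^sup>2"
    using sum_squares_bound by (simp add: mult.assoc)
  ultimately show ?thesis by linarith
qed

theorem lemma3p4:
  fixes P0 P1 P2 :: "real^3"
  assumes "P0 \<in> hyp" "P1 \<in> hyp" "P2 \<in> hyp"
    and "P0 \<noteq> P1" "P1 \<noteq> P2" "P2 \<noteq> P0"
  shows "let alpha = -1 + mink P0 P1 + mink P1 P2 + mink P2 P0;
             chi = mink (lcross P0 P1) P2;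
             d0 = sqrt (1 - 2 * mink P1 P2);
             d1 = sqrt (1 - 2 * mink P2 P0);
             d2 = sqrt (1 - 2 * mink P0 P1);
             gamma = 3 * (d0^2 + 1) * (d1^2 + 1) * (d2^2 + 1)
         in (2 * chi)^2 \<le> (1/3) * (d0^2 * (d1^2 - 3) * (d2^2 - 3)
                                  + d1^2 * (d2^2 - 3) * (d0^2 - 3)
                                  + d2^2 * (d0^2 - 3) * (d1^2 - 3))
            \<and> - 24 * alpha * chi \<le> gamma"
proof -
  define a where "a = - mink P1 P2"
  define b where "b = - mink P2 P0"
  define c where "c = - mink P0 P1"
  define chi where "chi = mink (lcross P0 P1) P2"
  have gram: "chi\<^sup>2 = 1 + 2*a*b*c - a\<^sup>2 - b\<^sup>2 - c\<^sup>2"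
    unfolding chi_def mink_lcross_squared a_def b_def c_def
    using assms(1-3) by (simp add: hyp_mink_self power2_eq_square)
  have d_sq: "(sqrt (1 - 2 * mink P1 P2))\<^sup>2 = 1 + 2*a"
       "(sqrt (1 - 2 * mink P2 P0))\<^sup>2 = 1 + 2*b"
       "(sqrt (1 - 2 * mink P0 P1))\<^sup>2 = 1 + 2*c"
    using mink_hyp_le_neg1 assms(1-3) unfolding a_def b_def c_def by force+
  have alpha: "-1 + mink P0 P1 + mink P1 P2 + mink P2 P0 = - (1 + a + b + c)"
    unfolding a_def b_def c_def by simp
  show ?thesis
    unfolding Let_def chi_def[symmetric] d_sq alpha
    using gram_chi_sq_le[OF gram] gram_chi_mult_le[OF gram]
    by (simp add: algebra_simps)
qed

end
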